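(* Let $\mathcal L_0$ be a recursive language, and $\mathcal L_1,\mathcal L_2$ recursive extensions of $\mathcal L_0$ with $\mathcal L_1\cap\mathcal L_2=\mathcal L_0$. Let $T_0$ be a complete first-order $\mathcal L_0$-theory, and for $i=1,2$ let $T_i$ be a first-order $\mathcal L_i$-theory and $p_i(\bar x)$ an $\mathcal L_i$-type. If $\mathrm{Con}_{\mathrm{sat}}(T_1+p_1{\uparrow}/T_0)$ and $\mathrm{Con}_{\mathrm{sat}}(T_2+p_2{\uparrow}/T_0)$, then there is a countable model of $T_0+T_1+T_2+p_1{\uparrow}+p_2{\uparrow}$.
   Context: A "type" $p(\bar x)$ is any set of first-order formulas with free variables among $\bar x$; $p{\uparrow}$ is the $\mathcal L_{\omega_1\omega}$-sentence $\forall\bar x\bigvee_{\psi\in p}\neg\psi(\bar x)$ expressing that $p$ is omitted. For a first-order theory $T_0$ in $\mathcal L$ and a (possibly non-first-order) theory $S$ in an extension $\mathcal L^+$, $\mathrm{Con}_{\mathrm{sat}}(S/T_0)$ means there is a model of $T_0+S$ whose $\mathcal L$-reduct is $\omega$-saturated. *)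

theory Defs
  imports Main
begin

inductive recfn :: "nat \<Rightarrow> (nat list \<Rightarrow> nat) \<Rightarrow> bool" where
  zero: "recfn n (\<lambda>_. 0)"
| suc:  "recfn 1 (\<lambda>xs. Suc (xs ! 0))"
| proj: "i < n \<Longrightarrow> recfn n (\<lambda>xs. xs ! i)"
| comp: "recfn m g \<Longrightarrow> length hs = m \<Longrightarrow> (\<forall>h\<in>set hs. recfn n h)
          \<Longrightarrow> recfn n (\<lambda>xs. g (map (\<lambda>h. h xs) hs))"
| prec: "recfn n g \<Longrightarrow> recfn (Suc (Suc n)) h
          \<Longrightarrow> recfn (Suc n) (\<lambda>xs. rec_nat (g (tl xs)) (\<lambda>y r. h (y # r # tl xs)) (hd xs))"
| mu:   "recfn (Suc n) g \<Longrightarrow> (\<forall>xs. length xs = n \<longrightarrow> (\<exists>y. g (y # xs) = 0))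
          \<Longrightarrow> recfn n (\<lambda>xs. LEAST y. g (y # xs) = 0)"

definition recursive_set :: "nat set \<Rightarrow> bool" where
  "recursive_set S \<longleftrightarrow> (\<exists>f. recfn 1 f \<and> (\<forall>x. x \<in> S \<longleftrightarrow> f [x] = 0))"

definition computable_on :: "nat set \<Rightarrow> (nat \<Rightarrow> nat) \<Rightarrow> bool" where
  "computable_on S g \<longleftrightarrow> (\<exists>f. recfn 1 f \<and> (\<forall>x\<in>S. f [x] = g x))"

text \<open>Symbols are natural numbers; arities are given by global functions
  (relation arity ra, function arity fa), so all languages are sublanguages of one
  big signature and agree on shared symbols. Constants are 0-ary function symbols.\<close>

record lang =
  rsyms :: "nat set"
  fsyms :: "nat set"

definition sublang :: "lang \<Rightarrow> lang \<Rightarrow> bool" where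
  "sublang L L' \<longleftrightarrow> rsyms L \<subseteq> rsyms L' \<and> fsyms L \<subseteq> fsyms L'"

definition lang_union :: "lang \<Rightarrow> lang \<Rightarrow> lang" where
  "lang_union L L' = \<lparr>rsyms = rsyms L \<union> rsyms L', fsyms = fsyms L \<union> fsyms L'\<rparr>"

definition lang_inter :: "lang \<Rightarrow> lang \<Rightarrow> lang" where
  "lang_inter L L' = \<lparr>rsyms = rsyms L \<inter> rsyms L', fsyms = fsyms L \<inter> fsyms L'\<rparr>"

definition recursive_lang :: "(nat \<Rightarrow> nat) \<Rightarrow> (nat \<Rightarrow> nat) \<Rightarrow> lang \<Rightarrow> bool" where
  "recursive_lang ra fa L \<longleftrightarrow> recursive_set (rsyms L) \<and> recursive_set (fsyms L)
     \<and> computable_on (rsyms L) ra \<and> computable_on (fsyms L) fa"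

datatype trm = Var nat | Fn nat "trm list"

datatype fm = Bot | Eq trm trm | Rel nat "trm list" | Neg fm | Conj fm fm | Ex nat fm

fun wf_trm :: "(nat \<Rightarrow> nat) \<Rightarrow> lang \<Rightarrow> trm \<Rightarrow> bool" where
  "wf_trm fa L (Var v) = True"
| "wf_trm fa L (Fn f ts) = (f \<in> fsyms L \<and> length ts = fa f \<and> (\<forall>t\<in>set ts. wf_trm fa L t))"

fun wf_fm :: "(nat \<Rightarrow> nat) \<Rightarrow> (nat \<Rightarrow> nat) \<Rightarrow> lang \<Rightarrow> fm \<Rightarrow> bool" where
  "wf_fm ra fa L Bot = True"
| "wf_fm ra fa L (Eq s t) = (wf_trm fa L s \<and> wf_trm fa L t)"
| "wf_fm ra fa L (Rel r ts) = (r \<in> rsyms L \<and> length ts = ra r \<and> (\<forall>t\<in>set ts. wf_trm fa L t))"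
| "wf_fm ra fa L (Neg p) = wf_fm ra fa L p"
| "wf_fm ra fa L (Conj p q) = (wf_fm ra fa L p \<and> wf_fm ra fa L q)"
| "wf_fm ra fa L (Ex v p) = wf_fm ra fa L p"

fun vars_trm :: "trm \<Rightarrow> nat set" where
  "vars_trm (Var v) = {v}"
| "vars_trm (Fn f ts) = (\<Union>t\<in>set ts. vars_trm t)"

fun frees :: "fm \<Rightarrow> nat set" where
  "frees Bot = {}"
| "frees (Eq s t) = vars_trm s \<union> vars_trm t"
| "frees (Rel r ts) = (\<Union>t\<in>set ts. vars_trm t)"
| "frees (Neg p) = frees p"
| "frees (Conj p q) = frees p \<union> frees q"
| "frees (Ex v p) = frees p - {v}"

definition sentence :: "(nat \<Rightarrow> nat) \<Rightarrow> (nat \<Rightarrow> nat) \<Rightarrow> lang \<Rightarrow> fm \<Rightarrow> bool" where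
  "sentence ra fa L p \<longleftrightarrow> wf_fm ra fa L p \<and> frees p = {}"

definition theory_of :: "(nat \<Rightarrow> nat) \<Rightarrow> (nat \<Rightarrow> nat) \<Rightarrow> lang \<Rightarrow> fm set \<Rightarrow> bool" where
  "theory_of ra fa L T \<longleftrightarrow> (\<forall>p\<in>T. sentence ra fa L p)"

definition type_of :: "(nat \<Rightarrow> nat) \<Rightarrow> (nat \<Rightarrow> nat) \<Rightarrow> lang \<Rightarrow> nat list \<Rightarrow> fm set \<Rightarrow> bool" where
  "type_of ra fa L xs p \<longleftrightarrow> (\<forall>\<psi>\<in>p. wf_fm ra fa L \<psi> \<and> frees \<psi> \<subseteq> set xs)"

record 'a struc =
  dom :: "'a set"
  fnt :: "nat \<Rightarrow> 'a list \<Rightarrow> 'a"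
  rel :: "nat \<Rightarrow> 'a list \<Rightarrow> bool"

definition is_struc :: "(nat \<Rightarrow> nat) \<Rightarrow> lang \<Rightarrow> 'a struc \<Rightarrow> bool" where
  "is_struc fa L M \<longleftrightarrow> dom M \<noteq> {} \<and>
     (\<forall>f\<in>fsyms L. \<forall>as. length as = fa f \<and> set as \<subseteq> dom M \<longrightarrow> fnt M f as \<in> dom M)"

fun eval :: "'a struc \<Rightarrow> (nat \<Rightarrow> 'a) \<Rightarrow> trm \<Rightarrow> 'a" where
  "eval M e (Var v) = e v"
| "eval M e (Fn f ts) = fnt M f (map (eval M e) ts)"

fun sat :: "'a struc \<Rightarrow> (nat \<Rightarrow> 'a) \<Rightarrow> fm \<Rightarrow> bool" where
  "sat M e Bot = False"
| "sat M e (Eq s t) = (eval M e s = eval M e t)"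
| "sat M e (Rel r ts) = rel M r (map (eval M e) ts)"
| "sat M e (Neg p) = (\<not> sat M e p)"
| "sat M e (Conj p q) = (sat M e p \<and> sat M e q)"
| "sat M e (Ex v p) = (\<exists>a\<in>dom M. sat M (e(v := a)) p)"

definition assign :: "'a struc \<Rightarrow> (nat \<Rightarrow> 'a) \<Rightarrow> bool" where
  "assign M e \<longleftrightarrow> range e \<subseteq> dom M"

definition models :: "'a struc \<Rightarrow> fm set \<Rightarrow> bool" where
  "models M T \<longleftrightarrow> (\<forall>p\<in>T. \<forall>e. assign M e \<longrightarrow> sat M e p)"

text \<open>M satisfies p\<up> = \<forall>xs. \<Or>_{\<psi>\<in>p} \<not>\<psi>(xs), i.e. M omits p.\<close>
definition omits :: "'a struc \<Rightarrow> fm set \<Rightarrow> bool" where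
  "omits M p \<longleftrightarrow> (\<forall>e. assign M e \<longrightarrow> (\<exists>\<psi>\<in>p. \<not> sat M e \<psi>))"

text \<open>The L-reduct of M is \<omega>-saturated: every set of L-formulas in one free
  variable x with finitely many parameters (the values under e of the finitely many other
  free variables) that is finitely satisfiable in M is realized in M.\<close>
definition omega_saturated :: "(nat \<Rightarrow> nat) \<Rightarrow> (nat \<Rightarrow> nat) \<Rightarrow> lang \<Rightarrow> 'a struc \<Rightarrow> bool" where
  "omega_saturated ra fa L M \<longleftrightarrow>
     (\<forall>x V e \<Sigma>. finite V \<and> assign M e \<and>
        (\<forall>\<phi>\<in>\<Sigma>. wf_fm ra fa L \<phi> \<and> frees \<phi> \<subseteq> insert x V) \<and>
        (\<forall>\<Sigma>0. finite \<Sigma>0 \<and> \<Sigma>0 \<subseteq> \<Sigma> \<longrightarrow> (\<exists>a\<in>dom M. \<forall>\<phi>\<in>\<Sigma>0. sat M (e(x := a)) \<phi>))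
      \<longrightarrow> (\<exists>a\<in>dom M. \<forall>\<phi>\<in>\<Sigma>. sat M (e(x := a)) \<phi>))"

text \<open>Models are taken over the countable carrier type nat; for countable (in
  particular recursive) languages this agrees with semantic consequence by
  Loewenheim-Skolem, and it is implied by completeness in any other sense.\<close>
definition complete_theory :: "(nat \<Rightarrow> nat) \<Rightarrow> (nat \<Rightarrow> nat) \<Rightarrow> lang \<Rightarrow> fm set \<Rightarrow> bool" where
  "complete_theory ra fa L T \<longleftrightarrow> theory_of ra fa L T \<and>
     (\<forall>\<phi>. sentence ra fa L \<phi> \<longrightarrow>
        (\<forall>M :: nat struc. is_struc fa L M \<and> models M T \<longrightarrow> (\<forall>e. assign M e \<longrightarrow> sat M e \<phi>)) \<or>
        (\<forall>M :: nat struc. is_struc fa L M \<and> models M T \<longrightarrow> (\<forall>e. assign M e \<longrightarrow> sat M e (Neg \<phi>))))"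

definition con_sat ::
  "(nat \<Rightarrow> nat) \<Rightarrow> (nat \<Rightarrow> nat) \<Rightarrow> lang \<Rightarrow> fm set \<Rightarrow> lang \<Rightarrow> fm set \<Rightarrow> fm set \<Rightarrow> 'a struc \<Rightarrow> bool" where
  "con_sat ra fa L0 T0 L T p M \<longleftrightarrow> is_struc fa L M \<and> models M T0 \<and> models M T \<and> omits M p
     \<and> omega_saturated ra fa L0 M"

end

(*
  Since T0 is complete, the two \<omega>-saturated models M1 and M2 satisfy the same L0-sentences
  (completeness only speaks about models on nat, so one first passes to countable elementary
  submodels). A back-and-forth construction between M1 and M2 then produces enumerations
  a 0, a 1, ... in M1 and b 0, b 1, ... in M2 such that every finite tuple of the a's has the same
  L0-type as the corresponding tuple of the b's, interleaving Tarski-Vaught witnesses so that the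
  a's form an L1-elementary substructure of M1 and the b's an L2-elementary substructure of M2.
  Identifying n with n' iff a n = a n' (equivalently b n = b n') yields a countable
  L1 \<union> L2-structure whose L1-reduct is elementarily embedded in M1 and whose L2-reduct in M2;
  it therefore models T0 + T1 + T2 and omits p1 and p2.
*)
theory Submission
  imports Defs "HOL-Library.Countable" "HOL-Library.More_List"
begin

instance trm :: countable by countable_datatype
instance fm :: countable by countable_datatype

lemma eval_cong: "\<forall>v\<in>vars_trm t. e v = e' v \<Longrightarrow> eval M e t = eval M e' t"
proof (induction t)
  case (Fn f ts)
  then have "map (eval M e) ts = map (eval M e') ts"
    by (auto intro!: map_cong)
  then show ?case by (simp only: eval.simps)
qed simp

lemma sat_cong: "\<forall>v\<in>frees \<phi>. e v = e' v \<Longrightarrow> sat M e \<phi> = sat M e' \<phi>"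
proof (induction \<phi> arbitrary: e e')
  case (Eq s t)
  then show ?case using eval_cong[of s e e' M] eval_cong[of t e e' M] by auto
next
  case (Rel r ts)
  then have "map (eval M e) ts = map (eval M e') ts"
    by (intro map_cong refl eval_cong) auto
  then show ?case by (simp only: sat.simps)
next
  case (Ex v p)
  then have "sat M (e(v := a)) p = sat M (e'(v := a)) p" for a
    by (intro Ex.IH) auto
  then show ?case by simp
next
  case (Conj p q)
  then have "sat M e p = sat M e' p" "sat M e q = sat M e' q"
    by (intro Conj.IH; auto)+
  then show ?case by simp
qed auto

lemma finite_vars_trm: "finite (vars_trm t)"
  by (induction t) auto

lemma finite_frees: "finite (frees \<phi>)"
  by (induction \<phi>) (auto simp: finite_vars_trm)

lemma frees_bounded: "\<exists>k. frees \<phi> \<subseteq> {..<k}"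
  using finite_frees[of \<phi>] finite_nat_set_iff_bounded by (auto simp: subset_eq)

lemma wf_trm_mono: "sublang L L' \<Longrightarrow> wf_trm fa L t \<Longrightarrow> wf_trm fa L' t"
  by (induction t) (auto simp: sublang_def)

lemma wf_fm_mono: "sublang L L' \<Longrightarrow> wf_fm ra fa L \<phi> \<Longrightarrow> wf_fm ra fa L' \<phi>"
  by (induction \<phi>) (auto simp: sublang_def intro: wf_trm_mono)

lemma is_struc_mono: "sublang L L' \<Longrightarrow> is_struc fa L' M \<Longrightarrow> is_struc fa L M"
  unfolding is_struc_def sublang_def by blast

lemma lang_inter_self [simp]: "lang_inter L L = L" and lang_union_self [simp]: "lang_union L L = L"
  by (simp_all add: lang_inter_def lang_union_def)

fun conjs :: "fm list \<Rightarrow> fm" where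
  "conjs [] = Neg Bot"
| "conjs (\<phi> # \<phi>s) = Conj \<phi> (conjs \<phi>s)"

lemma sat_conjs [simp]: "sat M e (conjs \<phi>s) \<longleftrightarrow> (\<forall>\<phi>\<in>set \<phi>s. sat M e \<phi>)"
  by (induction \<phi>s) auto

lemma wf_fm_conjs [simp]: "wf_fm ra fa L (conjs \<phi>s) \<longleftrightarrow> (\<forall>\<phi>\<in>set \<phi>s. wf_fm ra fa L \<phi>)"
  by (induction \<phi>s) auto

lemma frees_conjs [simp]: "frees (conjs \<phi>s) = (\<Union>\<phi>\<in>set \<phi>s. frees \<phi>)"
  by (induction \<phi>s) auto

section \<open>Back and forth between \<omega>-saturated structures\<close>

lemma omega_saturatedD:
  assumes "omega_saturated ra fa L M" "finite V" "assign M e"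
    "\<forall>\<phi>\<in>\<Sigma>. wf_fm ra fa L \<phi> \<and> frees \<phi> \<subseteq> insert x V"
    "\<And>\<Sigma>0. finite \<Sigma>0 \<Longrightarrow> \<Sigma>0 \<subseteq> \<Sigma> \<Longrightarrow> \<exists>a\<in>dom M. \<forall>\<phi>\<in>\<Sigma>0. sat M (e(x := a)) \<phi>"
  shows "\<exists>a\<in>dom M. \<forall>\<phi>\<in>\<Sigma>. sat M (e(x := a)) \<phi>"
  using assms(1) unfolding omega_saturated_def
  by (elim allE[of _ x] allE[of _ V] allE[of _ e] allE[of _ \<Sigma>] impE) (use assms(2-5) in auto)

definition same_type_below ::
  "(nat \<Rightarrow> nat) \<Rightarrow> (nat \<Rightarrow> nat) \<Rightarrow> lang \<Rightarrow> nat \<Rightarrow> 'a struc \<Rightarrow> (nat \<Rightarrow> 'a) \<Rightarrow> 'b struc \<Rightarrow> (nat \<Rightarrow> 'b) \<Rightarrow> bool"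
  where "same_type_below ra fa K m N1 e1 N2 e2 \<longleftrightarrow>
    (\<forall>\<phi>. wf_fm ra fa K \<phi> \<and> frees \<phi> \<subseteq> {..<m} \<longrightarrow> sat N1 e1 \<phi> = sat N2 e2 \<phi>)"

lemma same_type_below_sym:
  "same_type_below ra fa K m N1 e1 N2 e2 \<Longrightarrow> same_type_below ra fa K m N2 e2 N1 e1"
  unfolding same_type_below_def by auto

text \<open>The type of x over e1 0, ..., e1 (m - 1) is finitely satisfiable over e2 0, ..., e2 (m - 1):
  each finite part of it is a single existential formula with free variables below m.\<close>
lemma omega_saturated_extend:
  assumes sat2: "omega_saturated ra fa K N2" and e2: "assign N2 e2"
    and same: "same_type_below ra fa K m N1 e1 N2 e2" and x: "x \<in> dom N1"
  shows "\<exists>y\<in>dom N2. same_type_below ra fa K (Suc m) N1 (e1(m := x)) N2 (e2(m := y))"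
proof -
  define \<Sigma> where "\<Sigma> = {\<phi>. wf_fm ra fa K \<phi> \<and> frees \<phi> \<subseteq> insert m {..<m} \<and> sat N1 (e1(m := x)) \<phi>}"
  have "\<forall>\<phi>\<in>\<Sigma>. wf_fm ra fa K \<phi> \<and> frees \<phi> \<subseteq> insert m {..<m}"
    by (auto simp: \<Sigma>_def)
  moreover have "\<exists>y\<in>dom N2. \<forall>\<phi>\<in>\<Sigma>0. sat N2 (e2(m := y)) \<phi>" if "finite \<Sigma>0" "\<Sigma>0 \<subseteq> \<Sigma>" for \<Sigma>0
  proof -
    obtain \<phi>s where \<phi>s: "set \<phi>s = \<Sigma>0" using finite_list[OF \<open>finite \<Sigma>0\<close>] by blast
    let ?\<psi> = "Ex m (conjs \<phi>s)"
    have "wf_fm ra fa K ?\<psi>" "frees ?\<psi> \<subseteq> {..<m}"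
      using \<phi>s \<open>\<Sigma>0 \<subseteq> \<Sigma>\<close> by (auto simp: \<Sigma>_def)
    moreover have "\<forall>\<phi>\<in>set \<phi>s. sat N1 (e1(m := x)) \<phi>"
      using \<phi>s \<open>\<Sigma>0 \<subseteq> \<Sigma>\<close> by (auto simp: \<Sigma>_def)
    then have "sat N1 e1 ?\<psi>"
      using x by auto
    ultimately have "sat N2 e2 ?\<psi>"
      using same unfolding same_type_below_def by blast
    then show ?thesis using \<phi>s by auto
  qed
  ultimately have "\<exists>y\<in>dom N2. \<forall>\<phi>\<in>\<Sigma>. sat N2 (e2(m := y)) \<phi>"
    by (rule omega_saturatedD[OF sat2 finite_lessThan e2])
  then obtain y where y: "y \<in> dom N2" "\<forall>\<phi>\<in>\<Sigma>. sat N2 (e2(m := y)) \<phi>"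
    by blast
  have "sat N1 (e1(m := x)) \<phi> = sat N2 (e2(m := y)) \<phi>"
    if "wf_fm ra fa K \<phi>" "frees \<phi> \<subseteq> {..<Suc m}" for \<phi>
  proof (cases "sat N1 (e1(m := x)) \<phi>")
    case True
    then have "\<phi> \<in> \<Sigma>" using that by (auto simp: \<Sigma>_def lessThan_Suc)
    then show ?thesis using True y(2) by blast
  next
    case False
    then have "Neg \<phi> \<in> \<Sigma>" using that by (auto simp: \<Sigma>_def lessThan_Suc)
    then show ?thesis using False y(2) by (metis sat.simps(4))
  qed
  then show ?thesis
    using y(1) unfolding same_type_below_def by blast
qed

section \<open>The Tarski-Vaught test\<close>

definition witness :: "'a struc \<Rightarrow> fm \<Rightarrow> nat \<Rightarrow> (nat \<Rightarrow> 'a) \<Rightarrow> 'a" where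
  "witness N \<phi> v e =
     (SOME x. x \<in> dom N \<and> ((\<exists>y\<in>dom N. sat N (e(v := y)) \<phi>) \<longrightarrow> sat N (e(v := x)) \<phi>))"

lemma
  assumes "dom N \<noteq> {}"
  shows witness_in_dom: "witness N \<phi> v e \<in> dom N"
    and sat_witness: "\<exists>y\<in>dom N. sat N (e(v := y)) \<phi> \<Longrightarrow> sat N (e(v := witness N \<phi> v e)) \<phi>"
proof -
  have "\<exists>x. x \<in> dom N \<and> ((\<exists>y\<in>dom N. sat N (e(v := y)) \<phi>) \<longrightarrow> sat N (e(v := x)) \<phi>)"
    using assms by blast
  from someI_ex[OF this] show "witness N \<phi> v e \<in> dom N"
    and "\<exists>y\<in>dom N. sat N (e(v := y)) \<phi> \<Longrightarrow> sat N (e(v := witness N \<phi> v e)) \<phi>"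
    unfolding witness_def by blast+
qed

definition tarski_vaught :: "'a struc \<Rightarrow> (nat \<Rightarrow> 'a) \<Rightarrow> bool" where
  "tarski_vaught N a \<longleftrightarrow> range a \<subseteq> dom N \<and>
     (\<forall>\<phi> e v. (\<exists>x\<in>dom N. sat N ((a \<circ> e)(v := x)) \<phi>) \<longrightarrow> (\<exists>n. sat N ((a \<circ> e)(v := a n)) \<phi>))"

text \<open>An assignment into the range of a is, on the finitely many free variables of a formula,
  of the form a \<circ> nth_default 0 xs; so it suffices that a enumerates witnesses for all
  triples (\<phi>, v, xs).\<close>
lemma tarski_vaught_witnesses:
  assumes range: "range a \<subseteq> dom N"
    and witnesses: "\<And>\<phi> v xs. \<exists>n. a n = witness N \<phi> v (a \<circ> nth_default 0 xs)"
  shows "tarski_vaught N a"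
  unfolding tarski_vaught_def
proof (intro conjI range allI impI)
  fix \<phi> e v assume "\<exists>x\<in>dom N. sat N ((a \<circ> e)(v := x)) \<phi>"
  obtain k where k: "frees \<phi> \<subseteq> {..<k}" using frees_bounded by blast
  define xs where "xs = map e [0..<k]"
  have agree: "sat N ((a \<circ> e)(v := y)) \<phi> = sat N ((a \<circ> nth_default 0 xs)(v := y)) \<phi>" for y
    using k by (intro sat_cong) (auto simp: xs_def nth_default_def)
  obtain n where n: "a n = witness N \<phi> v (a \<circ> nth_default 0 xs)"
    using witnesses by blast
  have "dom N \<noteq> {}" using range by blast
  then have "sat N ((a \<circ> e)(v := a n)) \<phi>"
    unfolding agree n using \<open>\<exists>x\<in>dom N. _\<close> by (intro sat_witness) (auto simp: agree)
  then show "\<exists>n. sat N ((a \<circ> e)(v := a n)) \<phi>" ..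
qed

lemma tarski_vaught_fnt:
  assumes tv: "tarski_vaught N a" and N: "is_struc fa K N"
    and f: "f \<in> fsyms K" "length ns = fa f"
  shows "fnt N f (map a ns) \<in> range a"
proof -
  let ?\<phi> = "Eq (Var (fa f)) (Fn f (map Var [0..<fa f]))"
  have args: "map (\<lambda>i. ((a \<circ> (!) ns)(fa f := y)) i) [0..<fa f] = map a ns" for y
    using f(2) by (auto intro: nth_equalityI)
  have "set (map a ns) \<subseteq> dom N" using tv by (auto simp: tarski_vaught_def)
  then have "fnt N f (map a ns) \<in> dom N" using N f unfolding is_struc_def by auto
  moreover have "sat N ((a \<circ> (!) ns)(fa f := y)) ?\<phi> \<longleftrightarrow> y = fnt N f (map a ns)" for y
    using args[of y] by (simp add: comp_def)
  ultimately show ?thesis using tv unfolding tarski_vaught_def by (metis rangeI)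
qed

definition iso_onto_range :: "(nat \<Rightarrow> nat) \<Rightarrow> (nat \<Rightarrow> nat) \<Rightarrow> lang \<Rightarrow> 'a struc \<Rightarrow> 'b struc \<Rightarrow> ('a \<Rightarrow> 'b) \<Rightarrow> bool"
  where "iso_onto_range ra fa K M N a \<longleftrightarrow> inj_on a (dom M) \<and> a ` dom M = range a \<and>
    (\<forall>f\<in>fsyms K. \<forall>as. length as = fa f \<and> set as \<subseteq> dom M \<longrightarrow>
       fnt M f as \<in> dom M \<and> a (fnt M f as) = fnt N f (map a as)) \<and>
    (\<forall>r\<in>rsyms K. \<forall>as. length as = ra r \<and> set as \<subseteq> dom M \<longrightarrow> rel M r as = rel N r (map a as))"

lemma iso_onto_rangeI:
  assumes "inj_on a (dom M)" "a ` dom M = range a"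
    and "\<And>f as. f \<in> fsyms K \<Longrightarrow> length as = fa f \<Longrightarrow> set as \<subseteq> dom M \<Longrightarrow>
      fnt M f as \<in> dom M \<and> a (fnt M f as) = fnt N f (map a as)"
    and "\<And>r as. r \<in> rsyms K \<Longrightarrow> length as = ra r \<Longrightarrow> set as \<subseteq> dom M \<Longrightarrow>
      rel M r as = rel N r (map a as)"
  shows "iso_onto_range ra fa K M N a"
  using assms by (simp add: iso_onto_range_def)

definition elementary_map :: "(nat \<Rightarrow> nat) \<Rightarrow> (nat \<Rightarrow> nat) \<Rightarrow> lang \<Rightarrow> 'a struc \<Rightarrow> 'b struc \<Rightarrow> ('a \<Rightarrow> 'b) \<Rightarrow> bool"
  where "elementary_map ra fa K M N a \<longleftrightarrow> a ` dom M \<subseteq> dom N \<and>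
    (\<forall>\<phi> e. wf_fm ra fa K \<phi> \<longrightarrow> assign M e \<longrightarrow> sat M e \<phi> = sat N (a \<circ> e) \<phi>)"

lemma eval_iso_onto_range:
  assumes iso: "iso_onto_range ra fa K M N a" and "range e \<subseteq> dom M"
  shows "wf_trm fa K t \<Longrightarrow> eval M e t \<in> dom M \<and> a (eval M e t) = eval N (a \<circ> e) t"
proof (induction t)
  case (Fn f ts)
  then have "set (map (eval M e) ts) \<subseteq> dom M" "map a (map (eval M e) ts) = map (eval N (a \<circ> e)) ts"
    by (auto simp: comp_def)
  moreover have "f \<in> fsyms K" "length (map (eval M e) ts) = fa f"
    using Fn.prems by auto
  ultimately show ?case
    using iso unfolding iso_onto_range_def eval.simps by metis
qed (use assms in auto)

lemma elementary_map_tarski_vaught: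
  assumes iso: "iso_onto_range ra fa K M N a" and tv: "tarski_vaught N a"
  shows "elementary_map ra fa K M N a"
proof -
  have "sat M e \<phi> = sat N (a \<circ> e) \<phi>" if "wf_fm ra fa K \<phi>" "range e \<subseteq> dom M" for \<phi> e
    using that
  proof (induction \<phi> arbitrary: e)
    case (Eq s t)
    then have "eval M e s \<in> dom M" "eval M e t \<in> dom M"
      and as: "a (eval M e s) = eval N (a \<circ> e) s" "a (eval M e t) = eval N (a \<circ> e) t"
      using eval_iso_onto_range[OF iso] by auto
    moreover have "inj_on a (dom M)"
      using iso by (simp add: iso_onto_range_def)
    ultimately have "sat M e (Eq s t) \<longleftrightarrow> a (eval M e s) = a (eval M e t)"
      using inj_on_eq_iff by (metis sat.simps(2))
    then show ?case
      unfolding as by (simp only: sat.simps)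
  next
    case (Rel r ts)
    then have "set (map (eval M e) ts) \<subseteq> dom M" "map a (map (eval M e) ts) = map (eval N (a \<circ> e)) ts"
      using eval_iso_onto_range[OF iso] by auto
    moreover have "r \<in> rsyms K" "length (map (eval M e) ts) = ra r"
      using Rel.prems by auto
    ultimately show ?case
      using iso unfolding iso_onto_range_def sat.simps by metis
  next
    case (Ex v p)
    have "sat M (e(v := n)) p = sat N ((a \<circ> e)(v := a n)) p" if "n \<in> dom M" for n
    proof -
      have "range (e(v := n)) \<subseteq> dom M" using Ex.prems that by auto
      then show ?thesis
        using Ex.IH[of "e(v := n)"] Ex.prems(1) by (simp only: fun_upd_comp wf_fm.simps)
    qed
    then have "sat M e (Ex v p) \<longleftrightarrow> (\<exists>y\<in>a ` dom M. sat N ((a \<circ> e)(v := y)) p)"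
      by auto
    also have "\<dots> \<longleftrightarrow> (\<exists>n. sat N ((a \<circ> e)(v := a n)) p)"
      using iso by (auto simp: iso_onto_range_def)
    also have "\<dots> \<longleftrightarrow> sat N (a \<circ> e) (Ex v p)"
      using tv unfolding tarski_vaught_def sat.simps by blast
    finally show ?case .
  qed auto
  moreover have "a ` dom M \<subseteq> dom N"
    using iso tv by (auto simp: iso_onto_range_def tarski_vaught_def)
  ultimately show ?thesis by (simp add: elementary_map_def assign_def)
qed

lemma elementary_map_mono:
  assumes "sublang K' K" "elementary_map ra fa K M N a"
  shows "elementary_map ra fa K' M N a"
  using assms(2) wf_fm_mono[OF assms(1)] by (simp add: elementary_map_def)

lemma assign_elementary_map:
  "elementary_map ra fa K M N a \<Longrightarrow> assign M e \<Longrightarrow> assign N (a \<circ> e)"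
  by (auto simp: elementary_map_def assign_def)

lemma models_elementary_map:
  assumes "elementary_map ra fa K M N a" "theory_of ra fa K T" "models N T"
  shows "models M T"
  using assms assign_elementary_map[OF assms(1)]
  by (auto simp: models_def elementary_map_def theory_of_def sentence_def)

lemma omits_elementary_map:
  assumes "elementary_map ra fa K M N a" "type_of ra fa K xs p" "omits N p"
  shows "omits M p"
  using assms assign_elementary_map[OF assms(1)]
  by (fastforce simp: omits_def elementary_map_def type_of_def)

lemma sat_sentence_elementary_map:
  assumes "elementary_map ra fa K M N a" "sentence ra fa K \<phi>" "assign M e" "assign N e'"
  shows "sat M e \<phi> = sat N e' \<phi>"
proof -
  have "sat M e \<phi> = sat N (a \<circ> e) \<phi>"
    using assms by (simp add: elementary_map_def sentence_def)
  also have "\<dots> = sat N e' \<phi>"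
    using assms(2) by (intro sat_cong) (simp add: sentence_def)
  finally show ?thesis .
qed

section \<open>Amalgamation of \<omega>-saturated structures\<close>

lemma nth_default_le_sum_list: "nth_default 0 xs i \<le> (sum_list xs :: nat)"
  by (simp add: nth_default_def elem_le_sum_list)

definition task :: "nat \<Rightarrow> bool \<times> fm \<times> nat \<times> nat list" where
  "task m = from_nat (fst (prod_decode m))"

lemma task_surj: "\<exists>m\<ge>k. task m = t"
proof -
  have "task (prod_encode (to_nat t, k)) = t"
    by (simp add: task_def)
  then show ?thesis
    using le_prod_encode_2 by blast
qed

locale amalgamation =
  fixes ra fa :: "nat \<Rightarrow> nat" and K0 K1 K2 :: lang and N1 :: "'a struc" and N2 :: "'b struc"
  assumes struc1: "is_struc fa K1 N1" and struc2: "is_struc fa K2 N2"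
    and inter: "lang_inter K1 K2 = K0"
    and saturated1: "omega_saturated ra fa K0 N1" and saturated2: "omega_saturated ra fa K0 N2"
    and elem_equiv: "\<And>\<phi> e1 e2. sentence ra fa K0 \<phi> \<Longrightarrow> assign N1 e1 \<Longrightarrow> assign N2 e2 \<Longrightarrow>
      sat N1 e1 \<phi> = sat N2 e2 \<phi>"
begin

definition partial_elementary :: "nat \<Rightarrow> (nat \<Rightarrow> 'a) \<Rightarrow> (nat \<Rightarrow> 'b) \<Rightarrow> bool" where
  "partial_elementary m e1 e2 \<longleftrightarrow> assign N1 e1 \<and> assign N2 e2 \<and> same_type_below ra fa K0 m N1 e1 N2 e2"

text \<open>Task (left, \<phi>, v, xs) asks for a witness of Ex v \<phi> in N1 (if left) or N2 under the
  assignment i \<mapsto> e (nth_default 0 xs i), where e is the enumeration of that side built so far;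
  the partner on the other side is then supplied by saturation.\<close>
definition admissible_step ::
  "nat \<Rightarrow> (nat \<Rightarrow> 'a) \<times> (nat \<Rightarrow> 'b) \<Rightarrow> (nat \<Rightarrow> 'a) \<times> (nat \<Rightarrow> 'b) \<Rightarrow> bool" where
  "admissible_step m st st' \<longleftrightarrow> (\<exists>x y. st' = ((fst st)(m := x), (snd st)(m := y)) \<and>
     partial_elementary (Suc m) (fst st') (snd st') \<and>
     (case task m of (left, \<phi>, v, xs) \<Rightarrow>
        if left then x = witness N1 \<phi> v (fst st \<circ> nth_default 0 xs)
        else y = witness N2 \<phi> v (snd st \<circ> nth_default 0 xs)))"

lemma partial_elementary_extend1:
  assumes "partial_elementary m e1 e2" "x \<in> dom N1"
  shows "\<exists>y. partial_elementary (Suc m) (e1(m := x)) (e2(m := y))"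
proof -
  have "assign N2 e2" "same_type_below ra fa K0 m N1 e1 N2 e2"
    using assms(1) by (simp_all add: partial_elementary_def)
  then obtain y where "y \<in> dom N2" "same_type_below ra fa K0 (Suc m) N1 (e1(m := x)) N2 (e2(m := y))"
    using omega_saturated_extend[OF saturated2 _ _ assms(2)] by blast
  then have "partial_elementary (Suc m) (e1(m := x)) (e2(m := y))"
    using assms by (auto simp: partial_elementary_def assign_def)
  then show ?thesis ..
qed

lemma partial_elementary_extend2:
  assumes "partial_elementary m e1 e2" "y \<in> dom N2"
  shows "\<exists>x. partial_elementary (Suc m) (e1(m := x)) (e2(m := y))"
proof -
  have "assign N1 e1" "same_type_below ra fa K0 m N2 e2 N1 e1"
    using assms(1) by (simp_all add: partial_elementary_def same_type_below_sym)
  then obtain x where "x \<in> dom N1" "same_type_below ra fa K0 (Suc m) N2 (e2(m := y)) N1 (e1(m := x))"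
    using omega_saturated_extend[OF saturated1 _ _ assms(2)] by blast
  then have "partial_elementary (Suc m) (e1(m := x)) (e2(m := y))"
    using assms by (auto simp: partial_elementary_def assign_def same_type_below_sym)
  then show ?thesis ..
qed

lemma admissible_step_exists:
  assumes "partial_elementary m (fst st) (snd st)"
  shows "\<exists>st'. admissible_step m st st'"
proof -
  obtain e1 e2 where st: "st = (e1, e2)" by fastforce
  obtain left \<phi> v xs where task: "task m = (left, \<phi>, v, xs)"
    by (metis prod_cases4)
  have nonempty: "dom N1 \<noteq> {}" "dom N2 \<noteq> {}"
    using struc1 struc2 by (auto simp: is_struc_def)
  have pe: "partial_elementary m e1 e2"
    using assms st by simp
  have "\<exists>x y. partial_elementary (Suc m) (e1(m := x)) (e2(m := y)) \<and>
      (if left then x = witness N1 \<phi> v (e1 \<circ> nth_default 0 xs)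
       else y = witness N2 \<phi> v (e2 \<circ> nth_default 0 xs))"
  proof (cases left)
    case True
    then show ?thesis
      using partial_elementary_extend1[OF pe witness_in_dom[OF nonempty(1)]] by auto
  next
    case False
    then show ?thesis
      using partial_elementary_extend2[OF pe witness_in_dom[OF nonempty(2)]] by auto
  qed
  then obtain x y where "partial_elementary (Suc m) (e1(m := x)) (e2(m := y))"
    "if left then x = witness N1 \<phi> v (e1 \<circ> nth_default 0 xs)
     else y = witness N2 \<phi> v (e2 \<circ> nth_default 0 xs)"
    by blast
  then have "admissible_step m st (e1(m := x), e2(m := y))"
    unfolding admissible_step_def using task st by (intro exI[of _ x] exI[of _ y]) simp
  then show ?thesis ..
qed

lemma partial_elementary_admissible_step:
  "admissible_step m st st' \<Longrightarrow> partial_elementary (Suc m) (fst st') (snd st')"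
  by (auto simp: admissible_step_def)

primrec chain :: "nat \<Rightarrow> (nat \<Rightarrow> 'a) \<times> (nat \<Rightarrow> 'b)" where
  "chain 0 = (\<lambda>_. SOME x. x \<in> dom N1, \<lambda>_. SOME y. y \<in> dom N2)"
| "chain (Suc m) = (SOME st. admissible_step m (chain m) st)"

lemma partial_elementary_chain: "partial_elementary m (fst (chain m)) (snd (chain m))"
proof (induction m)
  case 0
  have "(SOME x. x \<in> dom N1) \<in> dom N1" "(SOME y. y \<in> dom N2) \<in> dom N2"
    using struc1 struc2 by (auto simp: is_struc_def some_in_eq)
  then show ?case
    using elem_equiv by (auto simp: partial_elementary_def same_type_below_def assign_def sentence_def)
next
  case (Suc m)
  have "admissible_step m (chain m) (chain (Suc m))"
    using someI_ex[OF admissible_step_exists[OF Suc.IH]] by simp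
  then show ?case
    by (rule partial_elementary_admissible_step)
qed

lemma admissible_step_chain: "admissible_step m (chain m) (chain (Suc m))"
  using someI_ex[OF admissible_step_exists[OF partial_elementary_chain]] by simp

definition enum1 :: "nat \<Rightarrow> 'a" where "enum1 i = fst (chain (Suc i)) i"
definition enum2 :: "nat \<Rightarrow> 'b" where "enum2 i = snd (chain (Suc i)) i"

lemma chain_eq_enum: "i < m \<Longrightarrow> fst (chain m) i = enum1 i \<and> snd (chain m) i = enum2 i"
proof (induction m)
  case (Suc m)
  obtain x y where "chain (Suc m) = ((fst (chain m))(m := x), (snd (chain m))(m := y))"
    using admissible_step_chain[of m] by (auto simp: admissible_step_def)
  with Suc show ?case
    by (cases "i = m") (auto simp: enum1_def enum2_def)
qed simp

lemma range_enum1: "range enum1 \<subseteq> dom N1" and range_enum2: "range enum2 \<subseteq> dom N2"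
proof -
  have "range (fst (chain m)) \<subseteq> dom N1 \<and> range (snd (chain m)) \<subseteq> dom N2" for m
    using partial_elementary_chain[of m] by (simp add: partial_elementary_def assign_def)
  then show "range enum1 \<subseteq> dom N1" "range enum2 \<subseteq> dom N2"
    unfolding enum1_def enum2_def by blast+
qed

lemma sat_enum1_eq_enum2: "wf_fm ra fa K0 \<phi> \<Longrightarrow> sat N1 enum1 \<phi> = sat N2 enum2 \<phi>"
proof -
  assume wf: "wf_fm ra fa K0 \<phi>"
  obtain m where m: "frees \<phi> \<subseteq> {..<m}" using frees_bounded by blast
  have "sat N1 enum1 \<phi> = sat N1 (fst (chain m)) \<phi>"
    using m chain_eq_enum by (intro sat_cong) auto
  also have "\<dots> = sat N2 (snd (chain m)) \<phi>"
    using partial_elementary_chain[of m] wf m by (auto simp: partial_elementary_def same_type_below_def)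
  also have "\<dots> = sat N2 enum2 \<phi>"
    using m chain_eq_enum by (intro sat_cong) auto
  finally show ?thesis .
qed

text \<open>Each task is scheduled at a step beyond all indices it mentions, where the chain already
  agrees with the final enumerations.\<close>
lemma enum_witnesses:
  "\<exists>n. enum1 n = witness N1 \<phi> v (enum1 \<circ> nth_default 0 xs)"
  "\<exists>n. enum2 n = witness N2 \<phi> v (enum2 \<circ> nth_default 0 xs)"
proof -
  have agree: "fst (chain m) \<circ> nth_default 0 xs = enum1 \<circ> nth_default 0 xs \<and>
      snd (chain m) \<circ> nth_default 0 xs = enum2 \<circ> nth_default 0 xs" if "sum_list xs < m" for m
  proof -
    have "nth_default 0 xs i < m" for i
      using nth_default_le_sum_list[of xs i] that by linarith
    then show ?thesis
      by (simp add: fun_eq_iff chain_eq_enum)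
  qed
  have "enum1 m = witness N1 \<phi> v (fst (chain m) \<circ> nth_default 0 xs)"
    if "task m = (True, \<phi>, v, xs)" for m
    using admissible_step_chain[of m] that
    unfolding admissible_step_def enum1_def by (auto simp del: chain.simps)
  moreover have "enum2 m = witness N2 \<phi> v (snd (chain m) \<circ> nth_default 0 xs)"
    if "task m = (False, \<phi>, v, xs)" for m
    using admissible_step_chain[of m] that
    unfolding admissible_step_def enum2_def by (auto simp del: chain.simps)
  moreover obtain m1 m2 where "sum_list xs < m1" "task m1 = (True, \<phi>, v, xs)"
    and "sum_list xs < m2" "task m2 = (False, \<phi>, v, xs)"
    using task_surj[of "Suc (sum_list xs)"] by (metis Suc_le_lessD)
  ultimately show "\<exists>n. enum1 n = witness N1 \<phi> v (enum1 \<circ> nth_default 0 xs)"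
    "\<exists>n. enum2 n = witness N2 \<phi> v (enum2 \<circ> nth_default 0 xs)"
    using agree by metis+
qed

lemma tarski_vaught_enum1: "tarski_vaught N1 enum1"
  and tarski_vaught_enum2: "tarski_vaught N2 enum2"
  using tarski_vaught_witnesses range_enum1 range_enum2 enum_witnesses by blast+

definition idx1 :: "'a \<Rightarrow> nat" where "idx1 x = (LEAST n. enum1 n = x)"
definition idx2 :: "'b \<Rightarrow> nat" where "idx2 y = (LEAST n. enum2 n = y)"

text \<open>Indices with equal enum1-values (equivalently, by enum_eq_iff, equal enum2-values) are
  identified via least representatives; K1-symbols are interpreted through N1, all others through N2.\<close>
definition amalgam :: "nat struc" where
  "amalgam = \<lparr>dom = {n. idx1 (enum1 n) = n},
     fnt = (\<lambda>f ns. if f \<in> fsyms K1 then idx1 (fnt N1 f (map enum1 ns))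
                   else idx1 (enum1 (idx2 (fnt N2 f (map enum2 ns))))),
     rel = (\<lambda>r ns. if r \<in> rsyms K1 then rel N1 r (map enum1 ns) else rel N2 r (map enum2 ns))\<rparr>"

lemma enum1_idx1: "x \<in> range enum1 \<Longrightarrow> enum1 (idx1 x) = x"
  unfolding idx1_def by (auto intro: LeastI)

lemma enum2_idx2: "y \<in> range enum2 \<Longrightarrow> enum2 (idx2 y) = y"
  unfolding idx2_def by (auto intro: LeastI)

lemma idx1_in_amalgam: "x \<in> range enum1 \<Longrightarrow> idx1 x \<in> dom amalgam"
  by (auto simp: amalgam_def enum1_idx1)

lemma enum1_image_amalgam: "enum1 ` dom amalgam = range enum1"
proof
  show "range enum1 \<subseteq> enum1 ` dom amalgam"
  proof
    fix x assume "x \<in> range enum1"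
    then show "x \<in> enum1 ` dom amalgam"
      using idx1_in_amalgam enum1_idx1 by (metis imageI)
  qed
qed blast

lemma enum_eq_iff: "enum1 i = enum1 j \<longleftrightarrow> enum2 i = enum2 j"
  using sat_enum1_eq_enum2[of "Eq (Var i) (Var j)"] by simp

lemma fnt_enum_eq_iff:
  "f \<in> fsyms K0 \<Longrightarrow> length ns = fa f \<Longrightarrow>
    enum1 n = fnt N1 f (map enum1 ns) \<longleftrightarrow> enum2 n = fnt N2 f (map enum2 ns)"
  using sat_enum1_eq_enum2[of "Eq (Var n) (Fn f (map Var ns))"] by (simp add: comp_def)

lemma rel_enum_eq:
  "r \<in> rsyms K0 \<Longrightarrow> length ns = ra r \<Longrightarrow> rel N1 r (map enum1 ns) = rel N2 r (map enum2 ns)"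
  using sat_enum1_eq_enum2[of "Rel r (map Var ns)"] by (simp add: comp_def)

lemma fnt_closed1: "f \<in> fsyms K1 \<Longrightarrow> length ns = fa f \<Longrightarrow> fnt N1 f (map enum1 ns) \<in> range enum1"
  using tarski_vaught_fnt[OF tarski_vaught_enum1 struc1] .

lemma fnt_closed2: "f \<in> fsyms K2 \<Longrightarrow> length ns = fa f \<Longrightarrow> fnt N2 f (map enum2 ns) \<in> range enum2"
  using tarski_vaught_fnt[OF tarski_vaught_enum2 struc2] .

lemma shared_symbols: "fsyms K1 \<inter> fsyms K2 \<subseteq> fsyms K0" "rsyms K1 \<inter> rsyms K2 \<subseteq> rsyms K0"
  using inter by (auto simp: lang_inter_def)

lemma iso_onto_range_enum1: "iso_onto_range ra fa K1 amalgam N1 enum1"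
proof (rule iso_onto_rangeI)
  show "inj_on enum1 (dom amalgam)"
  proof (rule inj_onI)
    fix n n' assume "n \<in> dom amalgam" "n' \<in> dom amalgam" "enum1 n = enum1 n'"
    then have "n = idx1 (enum1 n)" "n' = idx1 (enum1 n')" "enum1 n = enum1 n'"
      by (simp_all add: amalgam_def)
    then show "n = n'" by simp
  qed
  show "enum1 ` dom amalgam = range enum1"
    by (rule enum1_image_amalgam)
next
  fix f and ns :: "nat list" assume "f \<in> fsyms K1" "length ns = fa f"
  then have "fnt N1 f (map enum1 ns) \<in> range enum1"
    "fnt amalgam f ns = idx1 (fnt N1 f (map enum1 ns))"
    using fnt_closed1 by (simp_all add: amalgam_def)
  then show "fnt amalgam f ns \<in> dom amalgam \<and> enum1 (fnt amalgam f ns) = fnt N1 f (map enum1 ns)"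
    using idx1_in_amalgam enum1_idx1 by simp
qed (simp add: amalgam_def)

lemma iso_onto_range_enum2: "iso_onto_range ra fa K2 amalgam N2 enum2"
proof (rule iso_onto_rangeI)
  show "inj_on enum2 (dom amalgam)"
    using iso_onto_range_enum1 enum_eq_iff by (simp add: iso_onto_range_def inj_on_def)
  show "enum2 ` dom amalgam = range enum2"
  proof
    show "range enum2 \<subseteq> enum2 ` dom amalgam"
    proof
      fix y assume "y \<in> range enum2"
      then obtain k where k: "y = enum2 k" by blast
      have "enum1 (idx1 (enum1 k)) = enum1 k"
        using enum1_idx1 by blast
      then have "y = enum2 (idx1 (enum1 k))"
        using k enum_eq_iff by simp
      then show "y \<in> enum2 ` dom amalgam"
        using idx1_in_amalgam[OF rangeI] by blast
    qed
  qed blast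
next
  fix f and ns :: "nat list" assume f: "f \<in> fsyms K2" and ns: "length ns = fa f" "set ns \<subseteq> dom amalgam"
  show "fnt amalgam f ns \<in> dom amalgam \<and> enum2 (fnt amalgam f ns) = fnt N2 f (map enum2 ns)"
  proof (cases "f \<in> fsyms K1")
    case True
    then have "f \<in> fsyms K0" using f shared_symbols by blast
    moreover have "fnt amalgam f ns \<in> dom amalgam \<and> enum1 (fnt amalgam f ns) = fnt N1 f (map enum1 ns)"
      using iso_onto_range_enum1 True ns by (simp add: iso_onto_range_def)
    ultimately show ?thesis
      using fnt_enum_eq_iff ns by blast
  next
    case False
    let ?y = "fnt N2 f (map enum2 ns)"
    have "?y \<in> range enum2" using fnt_closed2 f ns by blast
    then have "enum2 (idx1 (enum1 (idx2 ?y))) = ?y"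
      using enum1_idx1 enum2_idx2 enum_eq_iff by (metis rangeI)
    then show ?thesis
      using False idx1_in_amalgam by (simp add: amalgam_def)
  qed
next
  fix r and ns :: "nat list" assume "r \<in> rsyms K2" "length ns = ra r"
  then show "rel amalgam r ns = rel N2 r (map enum2 ns)"
    using shared_symbols rel_enum_eq by (auto simp: amalgam_def)
qed

lemma is_struc_amalgam: "is_struc fa (lang_union K1 K2) amalgam"
  unfolding is_struc_def
proof (intro conjI ballI allI impI)
  show "dom amalgam \<noteq> {}"
    using idx1_in_amalgam[OF rangeI] by blast
  fix f and ns :: "nat list"
  assume "f \<in> fsyms (lang_union K1 K2)" and "length ns = fa f \<and> set ns \<subseteq> dom amalgam"
  then show "fnt amalgam f ns \<in> dom amalgam"
    using iso_onto_range_enum1 iso_onto_range_enum2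
    unfolding lang_union_def iso_onto_range_def by (metis Un_iff lang.select_convs(2))
qed

end

lemma (in amalgamation) elementary_map_amalgam:
  "elementary_map ra fa K1 amalgam N1 enum1" "elementary_map ra fa K2 amalgam N2 enum2"
  using elementary_map_tarski_vaught iso_onto_range_enum1 tarski_vaught_enum1
    iso_onto_range_enum2 tarski_vaught_enum2 by blast+

theorem omega_saturated_amalgamation:
  assumes "is_struc fa K1 N1" "is_struc fa K2 N2" "lang_inter K1 K2 = K0"
    and "omega_saturated ra fa K0 N1" "omega_saturated ra fa K0 N2"
    and "\<And>\<phi> e1 e2. sentence ra fa K0 \<phi> \<Longrightarrow> assign N1 e1 \<Longrightarrow> assign N2 e2 \<Longrightarrow>
      sat N1 e1 \<phi> = sat N2 e2 \<phi>"
  shows "\<exists>M :: nat struc. \<exists>a b. is_struc fa (lang_union K1 K2) M \<and>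
    elementary_map ra fa K1 M N1 a \<and> elementary_map ra fa K2 M N2 b"
proof -
  interpret amalgamation ra fa K0 K1 K2 N1 N2
    using assms by unfold_locales
  show ?thesis
    using is_struc_amalgam elementary_map_amalgam by blast
qed

section \<open>Joint consistency\<close>

text \<open>Downward Loewenheim-Skolem, obtained by amalgamating N with itself.\<close>
corollary omega_saturated_elementary_nat:
  assumes "is_struc fa L N" "omega_saturated ra fa L N"
  shows "\<exists>M :: nat struc. \<exists>a. is_struc fa L M \<and> elementary_map ra fa L M N a"
proof -
  have "sat N e1 \<phi> = sat N e2 \<phi>" if "sentence ra fa L \<phi>" for \<phi> e1 e2
    using that by (intro sat_cong) (simp add: sentence_def)
  then show ?thesis
    using omega_saturated_amalgamation[OF assms(1,1) lang_inter_self assms(2,2)] by auto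
qed

text \<open>Completeness is stated for models on nat only; countable elementary submodels transfer it to
  the \<omega>-saturated models.\<close>
lemma complete_theory_sat_eq:
  assumes complete: "complete_theory ra fa L T"
    and N1: "is_struc fa L N1" "models N1 T" "omega_saturated ra fa L N1"
    and N2: "is_struc fa L N2" "models N2 T" "omega_saturated ra fa L N2"
    and \<phi>: "sentence ra fa L \<phi>" and e: "assign N1 e1" "assign N2 e2"
  shows "sat N1 e1 \<phi> = sat N2 e2 \<phi>"
proof -
  have T: "theory_of ra fa L T"
    using complete by (simp add: complete_theory_def)
  obtain M1 :: "nat struc" and a1 where M1: "is_struc fa L M1" "elementary_map ra fa L M1 N1 a1"
    using omega_saturated_elementary_nat[OF N1(1,3)] by blast
  obtain M2 :: "nat struc" and a2 where M2: "is_struc fa L M2" "elementary_map ra fa L M2 N2 a2"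
    using omega_saturated_elementary_nat[OF N2(1,3)] by blast
  have models: "models M1 T" "models M2 T"
    using models_elementary_map[OF M1(2) T N1(2)] models_elementary_map[OF M2(2) T N2(2)] .
  obtain c1 c2 where "c1 \<in> dom M1" "c2 \<in> dom M2"
    using M1(1) M2(1) by (auto simp: is_struc_def)
  then have c: "assign M1 (\<lambda>_. c1)" "assign M2 (\<lambda>_. c2)"
    by (auto simp: assign_def)
  have "sat M1 (\<lambda>_. c1) \<phi> = sat M2 (\<lambda>_. c2) \<phi>"
    using complete \<phi> M1(1) M2(1) models c unfolding complete_theory_def by (metis sat.simps(4))
  then show ?thesis
    using sat_sentence_elementary_map[OF M1(2) \<phi> c(1) e(1)]
      sat_sentence_elementary_map[OF M2(2) \<phi> c(2) e(2)] by simp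
qed

theorem mainTheorem4:
  fixes ra fa :: "nat \<Rightarrow> nat"
    and L0 L1 L2 :: lang
    and T0 T1 T2 p1 p2 :: "fm set"
    and xs1 xs2 :: "nat list"
    and M1 :: "'a struc" and M2 :: "'b struc"
  assumes "recursive_lang ra fa L0" "recursive_lang ra fa L1" "recursive_lang ra fa L2"
    and "sublang L0 L1" "sublang L0 L2" "lang_inter L1 L2 = L0"
    and "complete_theory ra fa L0 T0"
    and "theory_of ra fa L1 T1" "theory_of ra fa L2 T2"
    and "type_of ra fa L1 xs1 p1" "type_of ra fa L2 xs2 p2"
    and "con_sat ra fa L0 T0 L1 T1 p1 M1"
    and "con_sat ra fa L0 T0 L2 T2 p2 M2"
  shows "\<exists>M :: nat struc. is_struc fa (lang_union L1 L2) M \<and>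
           models M T0 \<and> models M T1 \<and> models M T2 \<and> omits M p1 \<and> omits M p2"
proof -
  note sub1 = assms(4) and sub2 = assms(5) and complete = assms(7)
  have M1: "is_struc fa L1 M1" "models M1 T0" "models M1 T1" "omits M1 p1" "omega_saturated ra fa L0 M1"
    using assms(12) by (auto simp: con_sat_def)
  have M2: "is_struc fa L2 M2" "models M2 T0" "models M2 T2" "omits M2 p2" "omega_saturated ra fa L0 M2"
    using assms(13) by (auto simp: con_sat_def)
  have "\<exists>M :: nat struc. \<exists>a b. is_struc fa (lang_union L1 L2) M \<and>
      elementary_map ra fa L1 M M1 a \<and> elementary_map ra fa L2 M M2 b"
    using omega_saturated_amalgamation[OF M1(1) M2(1) assms(6) M1(5) M2(5)]
      complete_theory_sat_eq[OF complete is_struc_mono[OF sub1 M1(1)] M1(2,5)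
        is_struc_mono[OF sub2 M2(1)] M2(2,5)] by blast
  then obtain M :: "nat struc" and a b where M: "is_struc fa (lang_union L1 L2) M"
    and a: "elementary_map ra fa L1 M M1 a" and b: "elementary_map ra fa L2 M M2 b"
    by blast
  have "theory_of ra fa L0 T0"
    using complete by (simp add: complete_theory_def)
  then have "models M T0"
    using models_elementary_map[OF elementary_map_mono[OF sub1 a]] M1(2) by blast
  moreover have "models M T1" "models M T2"
    using models_elementary_map[OF a assms(8) M1(3)] models_elementary_map[OF b assms(9) M2(3)] .
  moreover have "omits M p1" "omits M p2"
    using omits_elementary_map[OF a assms(10) M1(4)] omits_elementary_map[OF b assms(11) M2(4)] .
  ultimately show ?thesis
    using M by blast
qed

end
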